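(* Let $A$ be a commutative subalgebra of a $K$-algebra $E$, $A'$ a non-empty subset of $A$, $\Delta=\{\mathrm{ad}_a\mid a\in A'\}$, and $R$ a subalgebra of $N_\Delta(E)$ with $A\subseteq R$. Then: (1) $R$ is a $\Delta$-locally nilpotent algebra and $\{R_i=R\cap N_\Delta(E)_i\}_{i\geq0}$ is its $\Delta$-order filtration. (2) If $\mathfrak{a}$ is a nonzero ideal of $R$, then $\mathfrak{a}_0=\mathfrak{a}\cap R_0=\mathfrak{a}\cap R^\Delta$ is a nonzero ideal of $R_0=R^\Delta\supseteq A$ such that $R\mathfrak{a}_0R\cap R_0=\mathfrak{a}_0$. (3) If, in addition, $R_0=R^\Delta$ is commutative, then $[R_1,\mathfrak{a}_0]\subseteq\mathfrak{a}_0$.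
   Context: $\mathrm{ad}_a(f)=af-fa$. For $i\ge1$, $\Delta^i=\{\delta_1\cdots\delta_i\mid\delta_j\in\Delta\}$. For an algebra $B$ on which $\Delta$ acts by derivations, $N_\Delta(B)_i=\{b\in B\mid\Delta^{i+1}b=0\}$ ($i\ge0$), $N_\Delta(B)=\bigcup_iN_\Delta(B)_i$; $B$ is $\Delta$-locally nilpotent if $B=N_\Delta(B)$, and then $\{N_\Delta(B)_i\}_{i\ge0}$ is its $\Delta$-order filtration. $B^\Delta=\bigcap_{\delta\in\Delta}\ker\delta$. *)

theory Defs
  imports Main
begin

definition k_algebra :: "('k::field \<Rightarrow> 'e::ring_1 \<Rightarrow> 'e) \<Rightarrow> bool" where
  "k_algebra sc \<longleftrightarrow>
     (\<forall>a b x. sc (a + b) x = sc a x + sc b x) \<and>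
     (\<forall>a x y. sc a (x + y) = sc a x + sc a y) \<and>
     (\<forall>a b x. sc (a * b) x = sc a (sc b x)) \<and>
     (\<forall>x. sc 1 x = x) \<and>
     (\<forall>a x y. sc a (x * y) = sc a x * y) \<and>
     (\<forall>a x y. sc a (x * y) = x * sc a y)"

definition subalgebra :: "('k::field \<Rightarrow> 'e::ring_1 \<Rightarrow> 'e) \<Rightarrow> 'e set \<Rightarrow> bool" where
  "subalgebra sc B \<longleftrightarrow> 0 \<in> B \<and> 1 \<in> B \<and>
     (\<forall>x\<in>B. \<forall>y\<in>B. x + y \<in> B) \<and> (\<forall>x\<in>B. \<forall>y\<in>B. x * y \<in> B) \<and>
     (\<forall>k. \<forall>x\<in>B. sc k x \<in> B)"

definition commutative_set :: "'e::ring_1 set \<Rightarrow> bool" where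
  "commutative_set B \<longleftrightarrow> (\<forall>x\<in>B. \<forall>y\<in>B. x * y = y * x)"

definition alg_ideal :: "('k::field \<Rightarrow> 'e::ring_1 \<Rightarrow> 'e) \<Rightarrow> 'e set \<Rightarrow> 'e set \<Rightarrow> bool" where
  "alg_ideal sc I B \<longleftrightarrow> I \<subseteq> B \<and> 0 \<in> I \<and>
     (\<forall>x\<in>I. \<forall>y\<in>I. x + y \<in> I) \<and> (\<forall>x\<in>I. - x \<in> I) \<and>
     (\<forall>k. \<forall>x\<in>I. sc k x \<in> I) \<and>
     (\<forall>r\<in>B. \<forall>x\<in>I. r * x \<in> I \<and> x * r \<in> I)"

definition ad :: "'e::ring_1 \<Rightarrow> 'e \<Rightarrow> 'e" where
  "ad a f = a * f - f * a"

text \<open>Application of an element \<open>\<delta>\<^sub>1\<cdots>\<delta>\<^sub>i\<close> of \<open>\<Delta>\<^sup>i\<close>, given as a list.\<close>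
definition comp_list :: "('e \<Rightarrow> 'e) list \<Rightarrow> 'e \<Rightarrow> 'e" where
  "comp_list ds = foldr (\<circ>) ds id"

definition Delta_pow_kills :: "('e::ring_1 \<Rightarrow> 'e) set \<Rightarrow> nat \<Rightarrow> 'e \<Rightarrow> bool" where
  "Delta_pow_kills \<Delta> i b \<longleftrightarrow>
     (\<forall>ds. set ds \<subseteq> \<Delta> \<and> length ds = i \<longrightarrow> comp_list ds b = 0)"

definition N_i :: "('e::ring_1 \<Rightarrow> 'e) set \<Rightarrow> 'e set \<Rightarrow> nat \<Rightarrow> 'e set" where
  "N_i \<Delta> B i = {b \<in> B. Delta_pow_kills \<Delta> (Suc i) b}"

definition N_Delta :: "('e::ring_1 \<Rightarrow> 'e) set \<Rightarrow> 'e set \<Rightarrow> 'e set" where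
  "N_Delta \<Delta> B = (\<Union>i. N_i \<Delta> B i)"

definition invariants :: "('e::ring_1 \<Rightarrow> 'e) set \<Rightarrow> 'e set \<Rightarrow> 'e set" where
  "invariants \<Delta> B = {b \<in> B. \<forall>\<delta>\<in>\<Delta>. \<delta> b = 0}"

definition acts_by_derivations ::
  "('k::field \<Rightarrow> 'e::ring_1 \<Rightarrow> 'e) \<Rightarrow> ('e \<Rightarrow> 'e) set \<Rightarrow> 'e set \<Rightarrow> bool" where
  "acts_by_derivations sc \<Delta> B \<longleftrightarrow> (\<forall>\<delta>\<in>\<Delta>.
     (\<forall>x\<in>B. \<delta> x \<in> B) \<and>
     (\<forall>x\<in>B. \<forall>y\<in>B. \<delta> (x + y) = \<delta> x + \<delta> y) \<and>
     (\<forall>k. \<forall>x\<in>B. \<delta> (sc k x) = sc k (\<delta> x)) \<and>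
     (\<forall>x\<in>B. \<forall>y\<in>B. \<delta> (x * y) = \<delta> x * y + x * \<delta> y))"

definition locally_nilpotent ::
  "('k::field \<Rightarrow> 'e::ring_1 \<Rightarrow> 'e) \<Rightarrow> ('e \<Rightarrow> 'e) set \<Rightarrow> 'e set \<Rightarrow> bool" where
  "locally_nilpotent sc \<Delta> B \<longleftrightarrow> acts_by_derivations sc \<Delta> B \<and> B = N_Delta \<Delta> B"

definition two_sided_prod :: "'e::ring_1 set \<Rightarrow> 'e set \<Rightarrow> 'e set" where
  "two_sided_prod R X = {(\<Sum>j<n. r j * x j * s j) | (n::nat) r x s.
      \<forall>j<n. r j \<in> R \<and> x j \<in> X \<and> s j \<in> R}"

end

theory Submission
  imports Defs
begin

text \<open>Each \<open>\<delta> = ad a\<close> with \<open>a \<in> A' \<subseteq> R\<close> is an inner derivation of \<open>R\<close>, so it maps every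
  ideal \<open>\<aa>\<close> of \<open>R\<close> into itself. If \<open>x \<in> \<aa>\<close> is nonzero with \<open>\<Delta>\<^sup>n x = 0\<close>, then either \<open>x\<close> is
  already invariant or some \<open>\<delta> x\<close> is a nonzero element of \<open>\<aa>\<close> killed by \<open>\<Delta>\<^sup>n\<^sup>-\<^sup>1\<close>; descending
  on \<open>n\<close> produces a nonzero invariant in \<open>\<aa>\<close>. As \<open>1 \<in> R\<close>, \<open>\<aa>\<^sub>0 \<subseteq> R \<aa>\<^sub>0 R \<subseteq> \<aa>\<close>, whence
  \<open>R \<aa>\<^sub>0 R \<inter> R\<^sub>0 = \<aa>\<^sub>0\<close>. For \<open>x \<in> R\<^sub>1\<close> every \<open>\<delta> x\<close> is invariant, so if \<open>R\<^sup>\<Delta>\<close> is commutative the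
  Leibniz rule gives \<open>\<delta> (x y - y x) = \<delta> x y - y \<delta> x = 0\<close> for invariant \<open>y\<close>.\<close>

lemma k_algebra_scale_zero: "k_algebra sc \<Longrightarrow> sc k 0 = 0"
  unfolding k_algebra_def by (metis add_cancel_right_right add_0)

lemma k_algebra_scale_diff: "k_algebra sc \<Longrightarrow> sc k (x - y) = sc k x - sc k y"
  unfolding k_algebra_def by (metis eq_diff_eq)

lemma k_algebra_scale_minus_one: "k_algebra sc \<Longrightarrow> sc (- 1) x = - x"
proof -
  assume alg: "k_algebra sc"
  have "sc 0 x = 0"
    using alg unfolding k_algebra_def by (metis add_cancel_right_right)
  moreover have "sc 0 x = sc 1 x + sc (- 1) x"
    using alg unfolding k_algebra_def by (metis add.right_inverse)
  moreover have "sc 1 x = x"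
    using alg unfolding k_algebra_def by blast
  ultimately show ?thesis
    by (simp add: add_eq_0_iff)
qed

lemma subalgebra_mult: "subalgebra sc B \<Longrightarrow> x \<in> B \<Longrightarrow> y \<in> B \<Longrightarrow> x * y \<in> B"
  unfolding subalgebra_def by blast

lemma subalgebra_uminus: "k_algebra sc \<Longrightarrow> subalgebra sc B \<Longrightarrow> x \<in> B \<Longrightarrow> - x \<in> B"
  unfolding subalgebra_def by (metis k_algebra_scale_minus_one)

lemma subalgebra_diff:
  "k_algebra sc \<Longrightarrow> subalgebra sc B \<Longrightarrow> x \<in> B \<Longrightarrow> y \<in> B \<Longrightarrow> x - y \<in> B"
  using subalgebra_uminus[of sc B y] unfolding subalgebra_def by (metis diff_conv_add_uminus)

lemma alg_ideal_subset: "alg_ideal sc I B \<Longrightarrow> I \<subseteq> B"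
  unfolding alg_ideal_def by blast

lemma alg_ideal_diff: "alg_ideal sc I B \<Longrightarrow> x \<in> I \<Longrightarrow> y \<in> I \<Longrightarrow> x - y \<in> I"
  unfolding alg_ideal_def by (metis diff_conv_add_uminus)

lemma alg_ideal_ad: "alg_ideal sc I B \<Longrightarrow> a \<in> B \<Longrightarrow> x \<in> I \<Longrightarrow> ad a x \<in> I"
  unfolding ad_def using alg_ideal_diff unfolding alg_ideal_def by blast

lemma ad_mult: "ad a (x * y) = ad a x * y + x * ad a y"
  unfolding ad_def by (simp add: algebra_simps)

lemma ad_acts_by_derivations:
  assumes alg: "k_algebra sc" and R: "subalgebra sc R" and A'_R: "A' \<subseteq> R"
  shows "acts_by_derivations sc (ad ` A') R"
  unfolding acts_by_derivations_def
proof (intro ballI conjI allI)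
  fix \<delta> assume "\<delta> \<in> ad ` A'"
  then obtain a where \<delta>: "\<delta> = ad a" and "a \<in> R"
    using A'_R by blast
  show "\<delta> x \<in> R" if "x \<in> R" for x
    unfolding \<delta> ad_def using alg R \<open>a \<in> R\<close> that by (simp add: subalgebra_diff subalgebra_mult)
  show "\<delta> (x + y) = \<delta> x + \<delta> y" for x y
    unfolding \<delta> ad_def by (simp add: algebra_simps)
  show "\<delta> (sc k x) = sc k (\<delta> x)" for k x
    using alg unfolding \<delta> ad_def k_algebra_def by (metis k_algebra_scale_diff[OF alg])
  show "\<delta> (x * y) = \<delta> x * y + x * \<delta> y" for x y
    unfolding \<delta> by (rule ad_mult)
qed

lemma derivation_closed: "acts_by_derivations sc \<Delta> B \<Longrightarrow> \<delta> \<in> \<Delta> \<Longrightarrow> x \<in> B \<Longrightarrow> \<delta> x \<in> B"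
  unfolding acts_by_derivations_def by blast

lemma derivation_add:
  "acts_by_derivations sc \<Delta> B \<Longrightarrow> \<delta> \<in> \<Delta> \<Longrightarrow> x \<in> B \<Longrightarrow> y \<in> B \<Longrightarrow> \<delta> (x + y) = \<delta> x + \<delta> y"
  unfolding acts_by_derivations_def by blast

lemma derivation_scale:
  "acts_by_derivations sc \<Delta> B \<Longrightarrow> \<delta> \<in> \<Delta> \<Longrightarrow> x \<in> B \<Longrightarrow> \<delta> (sc k x) = sc k (\<delta> x)"
  unfolding acts_by_derivations_def by blast

lemma derivation_mult:
  "acts_by_derivations sc \<Delta> B \<Longrightarrow> \<delta> \<in> \<Delta> \<Longrightarrow> x \<in> B \<Longrightarrow> y \<in> B \<Longrightarrow>
    \<delta> (x * y) = \<delta> x * y + x * \<delta> y"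
  unfolding acts_by_derivations_def by blast

lemma derivation_diff:
  assumes "acts_by_derivations sc \<Delta> B" "\<delta> \<in> \<Delta>" "x - y \<in> B" "y \<in> B"
  shows "\<delta> (x - y) = \<delta> x - \<delta> y"
  using assms unfolding acts_by_derivations_def by (metis eq_diff_eq)

lemma derivation_zero:
  assumes "acts_by_derivations sc \<Delta> B" "\<delta> \<in> \<Delta>" "0 \<in> B"
  shows "\<delta> 0 = 0"
  using derivation_diff[OF assms(1,2), of 0 0] assms(3) by simp

lemma comp_list_append: "comp_list (ds @ es) = comp_list ds \<circ> comp_list es"
  unfolding comp_list_def by (induction ds) auto

lemma Delta_pow_kills_0: "Delta_pow_kills \<Delta> 0 b \<longleftrightarrow> b = 0"
  unfolding Delta_pow_kills_def comp_list_def by auto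

lemma Delta_pow_kills_Suc:
  "Delta_pow_kills \<Delta> (Suc n) b \<longleftrightarrow> (\<forall>\<delta>\<in>\<Delta>. Delta_pow_kills \<Delta> n (\<delta> b))"
proof -
  have comp_snoc: "comp_list (ds @ [\<delta>]) b = comp_list ds (\<delta> b)" for ds \<delta>
    by (simp add: comp_list_append) (simp add: comp_list_def)
  show ?thesis
    unfolding Delta_pow_kills_def
  proof (intro iffI ballI allI impI)
    fix \<delta> ds
    assume "\<forall>ds. set ds \<subseteq> \<Delta> \<and> length ds = Suc n \<longrightarrow> comp_list ds b = 0"
      and "\<delta> \<in> \<Delta>" "set ds \<subseteq> \<Delta> \<and> length ds = n"
    then have "comp_list (ds @ [\<delta>]) b = 0"
      by simp
    then show "comp_list ds (\<delta> b) = 0"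
      by (simp add: comp_snoc)
  next
    fix ds
    assume kills: "\<forall>\<delta>\<in>\<Delta>. \<forall>ds. set ds \<subseteq> \<Delta> \<and> length ds = n \<longrightarrow> comp_list ds (\<delta> b) = 0"
      and ds: "set ds \<subseteq> \<Delta> \<and> length ds = Suc n"
    then obtain es \<delta> where "ds = es @ [\<delta>]" "length es = n"
      by (metis length_Suc_conv_rev)
    then show "comp_list ds b = 0"
      using kills ds by (simp add: comp_snoc)
  qed
qed

lemma invariantsI: "x \<in> B \<Longrightarrow> (\<And>\<delta>. \<delta> \<in> \<Delta> \<Longrightarrow> \<delta> x = 0) \<Longrightarrow> x \<in> invariants \<Delta> B"
  unfolding invariants_def by blast

lemma invariants_subset: "invariants \<Delta> B \<subseteq> B"
  unfolding invariants_def by blast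

lemma invariantsD: "x \<in> invariants \<Delta> B \<Longrightarrow> \<delta> \<in> \<Delta> \<Longrightarrow> \<delta> x = 0"
  unfolding invariants_def by blast

lemma N_i_eq_Int: "N_i \<Delta> B i = B \<inter> N_i \<Delta> UNIV i"
  unfolding N_i_def by auto

lemma N_i_0_eq_invariants: "N_i \<Delta> B 0 = invariants \<Delta> B"
  unfolding N_i_def invariants_def by (simp add: Delta_pow_kills_Suc Delta_pow_kills_0)

lemma N_i_Suc_derivation:
  "x \<in> N_i \<Delta> B (Suc i) \<Longrightarrow> \<delta> \<in> \<Delta> \<Longrightarrow> \<delta> x \<in> B \<Longrightarrow> \<delta> x \<in> N_i \<Delta> B i"
  unfolding N_i_def by (simp add: Delta_pow_kills_Suc[of \<Delta> "Suc i"])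

lemma locally_nilpotentI:
  "acts_by_derivations sc \<Delta> R \<Longrightarrow> R \<subseteq> N_Delta \<Delta> UNIV \<Longrightarrow> locally_nilpotent sc \<Delta> R"
  unfolding locally_nilpotent_def N_Delta_def N_i_eq_Int[of \<Delta> R] by blast

lemma commutative_subset_invariants_ad:
  "commutative_set A \<Longrightarrow> A' \<subseteq> A \<Longrightarrow> A \<subseteq> R \<Longrightarrow> A \<subseteq> invariants (ad ` A') R"
  unfolding commutative_set_def invariants_def ad_def by auto

lemma subalgebra_invariants:
  assumes alg: "k_algebra sc" and B: "subalgebra sc B" and der: "acts_by_derivations sc \<Delta> B"
  shows "subalgebra sc (invariants \<Delta> B)"
proof -
  have B_closed: "0 \<in> B" "1 \<in> B" "\<And>x y. x \<in> B \<Longrightarrow> y \<in> B \<Longrightarrow> x + y \<in> B"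
      "\<And>x y. x \<in> B \<Longrightarrow> y \<in> B \<Longrightarrow> x * y \<in> B" "\<And>k x. x \<in> B \<Longrightarrow> sc k x \<in> B"
    using B unfolding subalgebra_def by blast+
  have \<delta>_one: "\<delta> 1 = 0" if "\<delta> \<in> \<Delta>" for \<delta>
    using derivation_mult[OF der that B_closed(2,2)] by simp
  show ?thesis
    unfolding subalgebra_def
  proof (intro conjI ballI allI)
    show "0 \<in> invariants \<Delta> B"
      using B_closed(1) derivation_zero[OF der] by (blast intro: invariantsI)
    show "1 \<in> invariants \<Delta> B"
      using B_closed(2) \<delta>_one by (blast intro: invariantsI)
    fix x y assume x: "x \<in> invariants \<Delta> B" and y: "y \<in> invariants \<Delta> B"
    have xB: "x \<in> B" and yB: "y \<in> B"
      using x y invariants_subset by blast+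
    show "x + y \<in> invariants \<Delta> B"
      using B_closed(3)[OF xB yB]
    proof (rule invariantsI)
      show "\<delta> (x + y) = 0" if "\<delta> \<in> \<Delta>" for \<delta>
        using derivation_add[OF der that xB yB] invariantsD[OF x that] invariantsD[OF y that] by simp
    qed
    show "x * y \<in> invariants \<Delta> B"
      using B_closed(4)[OF xB yB]
    proof (rule invariantsI)
      show "\<delta> (x * y) = 0" if "\<delta> \<in> \<Delta>" for \<delta>
        using derivation_mult[OF der that xB yB] invariantsD[OF x that] invariantsD[OF y that] by simp
    qed
  next
    fix k x assume x: "x \<in> invariants \<Delta> B"
    then have xB: "x \<in> B"
      using invariants_subset by blast
    show "sc k x \<in> invariants \<Delta> B"
      using B_closed(5)[OF xB]
    proof (rule invariantsI)
      show "\<delta> (sc k x) = 0" if "\<delta> \<in> \<Delta>" for \<delta>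
        using derivation_scale[OF der that xB] invariantsD[OF x that] k_algebra_scale_zero[OF alg]
        by simp
    qed
  qed
qed

lemma alg_ideal_Int_subalgebra:
  assumes alg: "k_algebra sc" and I: "alg_ideal sc I B" and S: "subalgebra sc S" "S \<subseteq> B"
  shows "alg_ideal sc (I \<inter> S) S"
  using I S subalgebra_uminus[OF alg S(1)] unfolding alg_ideal_def subalgebra_def by blast

lemma alg_ideal_nonzero_invariant:
  assumes I: "alg_ideal sc I B" and A'_B: "A' \<subseteq> B"
    and x: "x \<in> I" "x \<noteq> 0" "Delta_pow_kills (ad ` A') n x"
  shows "\<exists>y \<in> I \<inter> invariants (ad ` A') B. y \<noteq> 0"
  using x
proof (induction n arbitrary: x)
  case 0
  then show ?case
    by (simp add: Delta_pow_kills_0)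
next
  case (Suc n)
  show ?case
  proof (cases "\<forall>\<delta> \<in> ad ` A'. \<delta> x = 0")
    case True
    then show ?thesis
      using Suc.prems alg_ideal_subset[OF I] by (blast intro: invariantsI)
  next
    case False
    then obtain a where "a \<in> A'" "ad a x \<noteq> 0"
      by blast
    moreover have "ad a x \<in> I"
      using alg_ideal_ad[OF I] A'_B \<open>a \<in> A'\<close> Suc.prems(1) by blast
    moreover have "Delta_pow_kills (ad ` A') n (ad a x)"
      using Suc.prems(3) \<open>a \<in> A'\<close> by (simp add: Delta_pow_kills_Suc)
    ultimately show ?thesis
      using Suc.IH by blast
  qed
qed

lemma alg_ideal_Int_invariants_nonzero:
  assumes I: "alg_ideal sc I R" "I \<noteq> {0}"
    and R_N: "R \<subseteq> N_Delta (ad ` A') UNIV" and A'_R: "A' \<subseteq> R"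
  shows "I \<inter> invariants (ad ` A') R \<noteq> {0}"
proof -
  obtain x where x: "x \<in> I" "x \<noteq> 0"
    using I unfolding alg_ideal_def by blast
  moreover obtain n where "Delta_pow_kills (ad ` A') (Suc n) x"
    using R_N alg_ideal_subset[OF I(1)] x(1) unfolding N_Delta_def N_i_def by blast
  ultimately show ?thesis
    using alg_ideal_nonzero_invariant[OF I(1) A'_R] by blast
qed

lemma two_sided_prod_Int_eq:
  assumes I: "alg_ideal sc I R" and one: "1 \<in> R"
  shows "two_sided_prod R (I \<inter> S) \<inter> S = I \<inter> S"
proof
  have "(\<Sum>j<n. r j * x j * s j) \<in> I"
    if "\<forall>j<n. r j \<in> R \<and> x j \<in> I \<and> s j \<in> R" for n :: nat and r x s
    using that
  proof (induction n)
    case 0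
    then show ?case
      using I unfolding alg_ideal_def by simp
  next
    case (Suc n)
    then show ?case
      using I unfolding alg_ideal_def by simp
  qed
  then show "two_sided_prod R (I \<inter> S) \<inter> S \<subseteq> I \<inter> S"
    unfolding two_sided_prod_def by blast
  have "z \<in> two_sided_prod R (I \<inter> S)" if "z \<in> I \<inter> S" for z
    unfolding two_sided_prod_def
    using that one by (intro CollectI exI[of _ 1] exI[of _ "\<lambda>_. 1"] exI[of _ "\<lambda>_. z"]) simp
  then show "I \<inter> S \<subseteq> two_sided_prod R (I \<inter> S) \<inter> S"
    by blast
qed

lemma commutator_mem_invariants:
  assumes der: "acts_by_derivations sc \<Delta> B" and B: "subalgebra sc B" and alg: "k_algebra sc"
    and comm: "commutative_set (invariants \<Delta> B)"
    and x: "x \<in> N_i \<Delta> B 1" and y: "y \<in> invariants \<Delta> B"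
  shows "x * y - y * x \<in> invariants \<Delta> B"
proof -
  have xB: "x \<in> B" and yB: "y \<in> B"
    using x y invariants_subset unfolding N_i_def by auto
  have "x * y - y * x \<in> B"
    using xB yB by (simp add: subalgebra_mult[OF B] subalgebra_diff[OF alg B])
  then show ?thesis
  proof (rule invariantsI)
    fix \<delta> assume \<delta>: "\<delta> \<in> \<Delta>"
    have "\<delta> x \<in> invariants \<Delta> B"
      using N_i_Suc_derivation[of x \<Delta> B 0, OF _ \<delta> derivation_closed[OF der \<delta> xB]] x
      by (simp add: N_i_0_eq_invariants)
    then have "\<delta> x * y = y * \<delta> x"
      using comm y unfolding commutative_set_def by blast
    moreover have "\<delta> (x * y - y * x) = \<delta> (x * y) - \<delta> (y * x)"
      using derivation_diff[OF der \<delta>] xB yB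
      by (simp add: subalgebra_mult[OF B] subalgebra_diff[OF alg B])
    ultimately show "\<delta> (x * y - y * x) = 0"
      using derivation_mult[OF der \<delta> xB yB] derivation_mult[OF der \<delta> yB xB] invariantsD[OF y \<delta>]
      by simp
  qed
qed

theorem corollary2p1:
  fixes sc :: "'k::field \<Rightarrow> 'e::ring_1 \<Rightarrow> 'e"
    and A A' R :: "'e set"
  defines "\<Delta> \<equiv> ad ` A'"
  assumes alg: "k_algebra sc"
    and A_sub: "subalgebra sc A" and A_comm: "commutative_set A"
    and A'_ne: "A' \<noteq> {}" and A'_A: "A' \<subseteq> A"
    and R_sub: "subalgebra sc R" and R_N: "R \<subseteq> N_Delta \<Delta> UNIV"
    and A_R: "A \<subseteq> R"
  shows "locally_nilpotent sc \<Delta> R \<and>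
         (\<forall>i. N_i \<Delta> R i = R \<inter> N_i \<Delta> UNIV i) \<and>
         (\<forall>\<aa>. alg_ideal sc \<aa> R \<longrightarrow> \<aa> \<noteq> {0} \<longrightarrow>
           \<aa> \<inter> (R \<inter> N_i \<Delta> UNIV 0) = \<aa> \<inter> invariants \<Delta> R \<and>
           R \<inter> N_i \<Delta> UNIV 0 = invariants \<Delta> R \<and>
           A \<subseteq> invariants \<Delta> R \<and>
           alg_ideal sc (\<aa> \<inter> invariants \<Delta> R) (invariants \<Delta> R) \<and>
           \<aa> \<inter> invariants \<Delta> R \<noteq> {0} \<and>
           two_sided_prod R (\<aa> \<inter> invariants \<Delta> R) \<inter> invariants \<Delta> R
             = \<aa> \<inter> invariants \<Delta> R) \<and>
         (\<forall>\<aa>. alg_ideal sc \<aa> R \<longrightarrow> \<aa> \<noteq> {0} \<longrightarrow>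
           commutative_set (invariants \<Delta> R) \<longrightarrow>
           (\<forall>x \<in> R \<inter> N_i \<Delta> UNIV 1. \<forall>y \<in> \<aa> \<inter> invariants \<Delta> R.
              x * y - y * x \<in> \<aa> \<inter> invariants \<Delta> R))"
proof -
  have A'_R: "A' \<subseteq> R"
    using A'_A A_R by blast
  have der: "acts_by_derivations sc \<Delta> R"
    unfolding \<Delta>_def using alg R_sub A'_R by (rule ad_acts_by_derivations)
  have R0: "R \<inter> N_i \<Delta> UNIV 0 = invariants \<Delta> R"
    by (metis N_i_eq_Int N_i_0_eq_invariants)
  show ?thesis
  proof (intro conjI allI impI ballI)
    show "locally_nilpotent sc \<Delta> R"
      using der R_N by (rule locally_nilpotentI)
    show "N_i \<Delta> R i = R \<inter> N_i \<Delta> UNIV i" for i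
      by (rule N_i_eq_Int)
    fix \<aa> assume \<aa>: "alg_ideal sc \<aa> R" "\<aa> \<noteq> {0}"
    show "\<aa> \<inter> (R \<inter> N_i \<Delta> UNIV 0) = \<aa> \<inter> invariants \<Delta> R" "R \<inter> N_i \<Delta> UNIV 0 = invariants \<Delta> R"
      using R0 by simp_all
    show "A \<subseteq> invariants \<Delta> R"
      unfolding \<Delta>_def using A_comm A'_A A_R by (rule commutative_subset_invariants_ad)
    show "alg_ideal sc (\<aa> \<inter> invariants \<Delta> R) (invariants \<Delta> R)"
      using alg \<aa>(1) subalgebra_invariants[OF alg R_sub der] invariants_subset
      by (rule alg_ideal_Int_subalgebra)
    show "\<aa> \<inter> invariants \<Delta> R \<noteq> {0}"
      using \<aa> R_N A'_R unfolding \<Delta>_def by (rule alg_ideal_Int_invariants_nonzero)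
    show "two_sided_prod R (\<aa> \<inter> invariants \<Delta> R) \<inter> invariants \<Delta> R = \<aa> \<inter> invariants \<Delta> R"
      by (rule two_sided_prod_Int_eq[OF \<aa>(1)]) (use R_sub in \<open>simp add: subalgebra_def\<close>)
    show "x * y - y * x \<in> \<aa> \<inter> invariants \<Delta> R"
      if "commutative_set (invariants \<Delta> R)" and x: "x \<in> R \<inter> N_i \<Delta> UNIV 1"
        and y: "y \<in> \<aa> \<inter> invariants \<Delta> R" for x y
    proof
      have "x * y \<in> \<aa>" "y * x \<in> \<aa>"
        using \<aa>(1) x y unfolding alg_ideal_def by auto
      then show "x * y - y * x \<in> \<aa>"
        by (rule alg_ideal_diff[OF \<aa>(1)])
      have "x \<in> N_i \<Delta> R 1"
        using x N_i_eq_Int[of \<Delta> R 1] by blast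
      then show "x * y - y * x \<in> invariants \<Delta> R"
        by (rule commutator_mem_invariants[OF der R_sub alg that(1) _ y[THEN IntD2]])
    qed
  qed
qed

end
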